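(* Let $n\ge 1$ and $1\le r\le n$. Then for every integer $z$ (equivalently, as a polynomial identity in $z$), $$ \alpha(n;k_1,\ldots,k_{r-1},k_{r}+z,k_{r+1},\ldots,k_n) = \sum_{p=0}^{\infty} (-1)^p \binom{n-1-p+z}{n-1} e_p(E_{k_1},\ldots,\widehat{E_{k_r}},\ldots,E_{k_n}) \, \alpha(n;k_1,\ldots,k_n), $$ where $\widehat{E_{k_r}}$ indicates that $E_{k_r}$ is omitted.
   Context: $E_x$ denotes the shift operator $E_x p(x)=p(x+1)$ acting on polynomials in the variables $k_1,\ldots,k_n$, and $\mathrm{id}$ is the identity. $\alpha(n;k_1,\ldots,k_n)$ is the polynomial $$\alpha(n;k_1,\ldots,k_n)=\prod_{1\le p<q\le n}(\mathrm{id}-E_{k_p}+E_{k_p}E_{k_q})\prod_{1\le i<j\le n}\frac{k_j-k_i}{j-i}$$ (for strictly increasing integers $k_1<\dots<k_n$ it counts monotone triangles with bottom row $(k_1,\ldots,k_n)$). $e_p$ denotes the $p$-th elementary symmetric function ($e_0=1$, $e_p=0$ for $p$ larger than the number of arguments), here evaluated at commuting shift operators. $\binom{x}{m}=x(x-1)\cdots(x-m+1)/m!$. *)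

theory Defs
  imports Complex_Main
begin

text \<open>Polynomials in k_1..k_n are represented by the functions they induce on
integer points: a point is a map k :: nat => int, of which only k 1, ..., k n matter.
Shift operators act on such functions.\<close>

definition shiftE :: "nat \<Rightarrow> ((nat \<Rightarrow> int) \<Rightarrow> rat) \<Rightarrow> ((nat \<Rightarrow> int) \<Rightarrow> rat)" where
  "shiftE i f = (\<lambda>k. f (k(i := k i + 1)))"

definition opT :: "nat \<Rightarrow> nat \<Rightarrow> ((nat \<Rightarrow> int) \<Rightarrow> rat) \<Rightarrow> ((nat \<Rightarrow> int) \<Rightarrow> rat)" where
  "opT p q f = (\<lambda>k. f k - shiftE p f k + shiftE p (shiftE q f) k)"

definition vdm :: "nat \<Rightarrow> (nat \<Rightarrow> int) \<Rightarrow> rat" where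
  "vdm n k = (\<Prod>i\<in>{1..n}. \<Prod>j\<in>{i<..n}. of_int (k j - k i) / of_nat (j - i))"

text \<open>alpha(n; k_1..k_n) = prod_{1<=p<q<=n} (id - E_p + E_p E_q) applied to vdm n
(the operators commute; we compose them in lexicographic order of (p,q)).\<close>
definition alpha :: "nat \<Rightarrow> (nat \<Rightarrow> int) \<Rightarrow> rat" where
  "alpha n = foldr (\<lambda>(p, q). opT p q) [(p, q). p \<leftarrow> [1..<n+1], q \<leftarrow> [Suc p..<n+1]] (vdm n)"

text \<open>e_p(E_{k_1},...,omitted E_{k_r},...,E_{k_n}) applied to f: sum over p-subsets S of
{1..n}-{r} of the product of the shifts E_i, i in S.\<close>
definition esym_shift :: "nat \<Rightarrow> nat \<Rightarrow> nat \<Rightarrow> ((nat \<Rightarrow> int) \<Rightarrow> rat) \<Rightarrow> ((nat \<Rightarrow> int) \<Rightarrow> rat)" where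
  "esym_shift n r p f = (\<lambda>k. \<Sum>S\<in>{S. S \<subseteq> {1..n} - {r} \<and> card S = p}.
      f (\<lambda>i. if i \<in> S then k i + 1 else k i))"

end

theory Submission
  imports
    Defs
    "Jordan_Normal_Form.Determinant"
    "HOL-Computational_Algebra.Polynomial"
    "HOL-Computational_Algebra.Formal_Power_Series"
begin

text \<open>
  The product \<open>vdm n\<close> is the determinant of the binomial matrix \<open>(k\<^sub>i gchoose j)\<close>. By Pascal's
  rule, applying \<open>1 + t E\<^sub>i\<close> to every row amounts to right multiplication with an upper
  bidiagonal matrix of determinant \<open>(1 + t)\<^sup>n\<close>, so \<open>\<Prod>\<^sub>i (1 + t E\<^sub>i) vdm = (1 + t)\<^sup>n vdm\<close>; comparing coefficients,
  \<open>e\<^sub>q(E\<^sub>1, \<dots>, E\<^sub>n) vdm = (n choose q) vdm\<close>. The operators defining \<open>alpha\<close> commute with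
  the shifts, so \<open>alpha\<close> inherits this. Splitting
  \<open>e\<^sub>p\<^sub>+\<^sub>1(E\<^sub>1, \<dots>, E\<^sub>n) = E\<^sub>r e\<^sub>p(\<dots>) + e\<^sub>p\<^sub>+\<^sub>1(\<dots>)\<close> with \<open>E\<^sub>r\<close> omitted on the right gives the
  recurrence \<open>E\<^sub>r G\<^sub>p = (n choose p+1) alpha - G\<^sub>p\<^sub>+\<^sub>1\<close> for \<open>G\<^sub>p = e\<^sub>p(\<dots>) alpha\<close>. The claimed
  expansion obeys the same recurrence in \<open>z\<close>, because the \<open>n\<close>-th difference of a polynomial of
  degree \<open>n - 1\<close> vanishes, and it is correct at \<open>z = 0\<close>; induction on \<open>z\<close> in both directions
  finishes the proof.
\<close>

section \<open>Determinants of binomial matrices\<close>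

definition vandermonde_quot :: "nat \<Rightarrow> (nat \<Rightarrow> 'a::field_char_0) \<Rightarrow> 'a" where
  "vandermonde_quot m x = (\<Prod>i=0..<m. \<Prod>j=Suc i..<m. (x j - x i) / of_nat (j - i))"

definition binomial_mat :: "nat \<Rightarrow> (nat \<Rightarrow> 'a::field_char_0) \<Rightarrow> 'a mat" where
  "binomial_mat m x = mat m m (\<lambda>(i, j). x i gchoose j)"

lemma binomial_mat_carrier [simp]: "binomial_mat m x \<in> carrier_mat m m"
  by (simp add: binomial_mat_def)

lemma vandermonde_quot_translate: "vandermonde_quot m (\<lambda>i. x i + c) = vandermonde_quot m x"
  by (simp add: vandermonde_quot_def)

lemma vandermonde_quot_Suc:
  "vandermonde_quot (Suc m) x =
     (\<Prod>i=0..<m. (x (Suc i) - x 0) / of_nat (Suc i)) * vandermonde_quot m (\<lambda>i. x (Suc i))"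
  unfolding vandermonde_quot_def
  by (simp only: prod.atLeast0_lessThan_Suc_shift comp_def prod.shift_bounds_Suc_ivl diff_Suc_Suc diff_zero)

lemma det_mat_eq_sum_permutes:
  "det (mat m m (\<lambda>(i, j). f i j)) = (\<Sum>p | p permutes {0..<m}. signof p * (\<Prod>i=0..<m. f i (p i)))"
proof -
  have "(\<Prod>i=0..<m. mat m m (\<lambda>(i, j). f i j) $$ (i, p i)) = (\<Prod>i=0..<m. f i (p i))"
    if "p permutes {0..<m}" for p
    using that by (intro prod.cong) (auto dest: permutes_in_image)
  then show ?thesis
    by (simp add: det_def'[OF mat_carrier])
qed

lemma det_mat_upper_triangular:
  assumes "\<And>i j. j < i \<Longrightarrow> f i j = 0"
  shows "det (mat m m (\<lambda>(i, j). f i j)) = (\<Prod>i=0..<m. f i i)"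
proof -
  have "upper_triangular (mat m m (\<lambda>(i, j). f i j))"
    using assms by (auto simp: upper_triangular_def)
  then show ?thesis
    by (simp add: det_upper_triangular[OF _ mat_carrier] prod_list_diag_prod)
qed

lemma det_mat_scale:
  fixes a b :: "nat \<Rightarrow> 'a::comm_ring_1"
  shows "det (mat m m (\<lambda>(i, j). a i * b j * f i j)) =
    prod a {0..<m} * prod b {0..<m} * det (mat m m (\<lambda>(i, j). f i j))"
proof -
  have perm: "signof p * (\<Prod>i=0..<m. a i * b (p i) * f i (p i)) =
      prod a {0..<m} * prod b {0..<m} * (signof p * (\<Prod>i=0..<m. f i (p i)))"
    if "p permutes {0..<m}" for p
    using prod.permute[OF that, of b] by (simp add: prod.distrib comp_def ac_simps)
  show ?thesis
    unfolding det_mat_eq_sum_permutes sum_distrib_left by (intro sum.cong) (simp_all add: perm)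
qed

text \<open>Vandermonde's convolution writes the translated binomial matrix as the original one
times a unitriangular matrix.\<close>
lemma det_binomial_mat_translate: "det (binomial_mat m (\<lambda>i. x i + c)) = det (binomial_mat m x)"
proof -
  define U where "U = mat m m (\<lambda>(l, j). if l \<le> j then c gchoose (j - l) else 0)"
  have U: "U \<in> carrier_mat m m" by (simp add: U_def)
  have "binomial_mat m (\<lambda>i. x i + c) = binomial_mat m x * U"
  proof (rule eq_matI)
    fix i j assume "i < dim_row (binomial_mat m x * U)" "j < dim_col (binomial_mat m x * U)"
    then have i: "i < m" and j: "j < m" by (auto simp: U_def binomial_mat_def)
    have "(binomial_mat m x * U) $$ (i, j) =
        (\<Sum>l<m. (x i gchoose l) * (if l \<le> j then c gchoose (j - l) else 0))"
      using i j by (simp add: binomial_mat_def U_def scalar_prod_def atLeast0LessThan)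
    also have "\<dots> = (\<Sum>l\<le>j. (x i gchoose l) * (c gchoose (j - l)))"
      using j by (intro sum.mono_neutral_cong_right) auto
    also have "\<dots> = (x i + c) gchoose j"
      by (simp add: gbinomial_Vandermonde atMost_atLeast0)
    finally show "binomial_mat m (\<lambda>i. x i + c) $$ (i, j) = (binomial_mat m x * U) $$ (i, j)"
      using i j by (simp add: binomial_mat_def)
  qed (auto simp: U_def binomial_mat_def)
  moreover have "det U = 1"
    unfolding U_def by (subst det_mat_upper_triangular) auto
  ultimately show ?thesis
    using det_mult[OF binomial_mat_carrier U] by simp
qed

lemma det_binomial_mat: "det (binomial_mat m x) = vandermonde_quot m x"
proof (induction m arbitrary: x)
  case 0
  then show ?case by (simp add: vandermonde_quot_def binomial_mat_def)
next
  case (Suc m)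
  define y where "y = (\<lambda>i. x i - x 0)"
  let ?B = "binomial_mat (Suc m) y"
  let ?M = "mat m m (\<lambda>(i, j). y (Suc i) * (1 / of_nat (Suc j)) * ((y (Suc i) - 1) gchoose j))"
  have "det (binomial_mat (Suc m) x) = det ?B"
    using det_binomial_mat_translate[of "Suc m" x "- x 0"] by (simp add: y_def)
  also have "det ?B = (\<Sum>j<Suc m. ?B $$ (0, j) * cofactor ?B 0 j)"
    by (rule laplace_expansion_row) auto
  also have "\<dots> = (\<Sum>j<Suc m. if j = 0 then cofactor ?B 0 j else 0)"
    by (intro sum.cong) (auto simp: binomial_mat_def y_def gbinomial_0_left)
  also have "\<dots> = det (mat_delete ?B 0 0)"
    by (simp add: cofactor_def)
  also have "mat_delete ?B 0 0 = ?M"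
  proof (rule eq_matI)
    fix i j assume "i < dim_row ?M" "j < dim_col ?M"
    then have "i < m" "j < m" by auto
    moreover have "y (Suc i) gchoose Suc j = y (Suc i) * (1 / of_nat (Suc j)) * ((y (Suc i) - 1) gchoose j)"
      using gbinomial_absorption[of j "y (Suc i)"] by (simp add: field_simps del: of_nat_Suc)
    ultimately show "mat_delete ?B 0 0 $$ (i, j) = ?M $$ (i, j)"
      by (simp add: mat_delete_def binomial_mat_def)
  qed (auto simp: mat_delete_def binomial_mat_def)
  also have "det ?M = (\<Prod>i=0..<m. y (Suc i)) * (\<Prod>j=0..<m. 1 / of_nat (Suc j)) *
      det (binomial_mat m (\<lambda>i. y (Suc i) - 1))"
    unfolding binomial_mat_def by (rule det_mat_scale)
  also have "det (binomial_mat m (\<lambda>i. y (Suc i) - 1)) = vandermonde_quot m (\<lambda>i. x (Suc i))"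
    using Suc.IH[of "\<lambda>i. y (Suc i) - 1"] vandermonde_quot_translate[of m "\<lambda>i. x (Suc i)" "- x 0 - 1"]
    by (simp add: y_def algebra_simps)
  also have "(\<Prod>i=0..<m. y (Suc i)) * (\<Prod>j=0..<m. 1 / of_nat (Suc j)) =
      (\<Prod>i=0..<m. (x (Suc i) - x 0) / of_nat (Suc i))"
    by (simp add: y_def prod.distrib[symmetric] del: of_nat_Suc)
  finally show ?case by (simp add: vandermonde_quot_Suc)
qed

lemma det_mat_add_rows:
  fixes f g :: "nat \<Rightarrow> nat \<Rightarrow> 'a::comm_ring_1"
  shows "det (mat m m (\<lambda>(i, j). f i j + t * g i j)) =
    (\<Sum>S\<in>Pow {0..<m}. t ^ card S * det (mat m m (\<lambda>(i, j). if i \<in> S then g i j else f i j)))"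
proof -
  have expand: "(\<Prod>i=0..<m. f i (p i) + t * g i (p i)) =
      (\<Sum>S\<in>Pow {0..<m}. t ^ card S * (\<Prod>i=0..<m. if i \<in> S then g i (p i) else f i (p i)))" for p
  proof -
    have "(\<Prod>i=0..<m. t * g i (p i) + f i (p i)) =
        (\<Sum>S\<in>Pow {0..<m}. (\<Prod>i\<in>S. t * g i (p i)) * (\<Prod>i\<in>{0..<m} - S. f i (p i)))"
      by (rule prod_add) simp
    also have "\<dots> = (\<Sum>S\<in>Pow {0..<m}. t ^ card S * (\<Prod>i=0..<m. if i \<in> S then g i (p i) else f i (p i)))"
      by (intro sum.cong) (auto simp: prod.If_cases prod.distrib Int_absorb1 Diff_eq)
    finally show ?thesis by (simp add: add.commute)
  qed
  show ?thesis
    unfolding det_mat_eq_sum_permutes expand sum_distrib_left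
    by (subst sum.swap) (simp add: mult.left_commute)
qed

text \<open>Applying \<open>\<Prod>\<^sub>i (1 + t E\<^sub>i)\<close> to the rows of the binomial matrix amounts to multiplying it
by the bidiagonal matrix with \<open>1 + t\<close> on the diagonal and \<open>t\<close> above it (Pascal's rule).\<close>
lemma det_binomial_mat_incr_sum:
  "(\<Sum>S\<in>Pow {0..<m}. t ^ card S * det (binomial_mat m (\<lambda>i. if i \<in> S then x i + 1 else x i))) =
    (1 + t) ^ m * det (binomial_mat m x)"
proof -
  define Q where "Q = mat m m (\<lambda>(i, j). if i = j then 1 + t else if j = Suc i then t else 0)"
  have Q: "Q \<in> carrier_mat m m" by (simp add: Q_def)
  let ?M = "mat m m (\<lambda>(i, j). (x i gchoose j) + t * ((x i + 1) gchoose j))"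
  have BQ: "binomial_mat m x * Q = ?M"
  proof (rule eq_matI)
    fix i j assume "i < dim_row ?M" "j < dim_col ?M"
    then have i: "i < m" and j: "j < m" by auto
    have "(binomial_mat m x * Q) $$ (i, j) =
        (\<Sum>l<m. (if l = j then (x i gchoose l) * (1 + t) else 0) +
                 (if Suc l = j then (x i gchoose l) * t else 0))"
      using i j by (simp add: binomial_mat_def Q_def scalar_prod_def atLeast0LessThan)
        (intro sum.cong; auto)
    also have "\<dots> = (x i gchoose j) + t * ((x i + 1) gchoose j)"
    proof (cases j)
      case 0
      then show ?thesis using j by (simp add: algebra_simps)
    next
      case (Suc j')
      then show ?thesis
        using j gbinomial_Suc_Suc[of "x i" j'] by (simp add: sum.distrib algebra_simps)
    qed
    finally show "(binomial_mat m x * Q) $$ (i, j) = ?M $$ (i, j)"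
      using i j by simp
  qed (auto simp: binomial_mat_def Q_def)
  have detQ: "det Q = (1 + t) ^ m"
    unfolding Q_def by (subst det_mat_upper_triangular) auto
  have "(1 + t) ^ m * det (binomial_mat m x) = det (binomial_mat m x * Q)"
    by (simp add: det_mult[OF binomial_mat_carrier Q] detQ)
  also have "\<dots> = (\<Sum>S\<in>Pow {0..<m}. t ^ card S * det (binomial_mat m (\<lambda>i. if i \<in> S then x i + 1 else x i)))"
    unfolding BQ det_mat_add_rows by (simp add: binomial_mat_def if_distrib if_distribR)
  finally show ?thesis ..
qed

section \<open>Elementary symmetric functions of shift operators\<close>

lemma polyfun_coeffs_eq:
  fixes c d :: "nat \<Rightarrow> 'a::{idom, ring_char_0}"
  assumes "\<And>t. (\<Sum>i\<le>n. c i * t ^ i) = (\<Sum>i\<le>n. d i * t ^ i)" and "q \<le> n"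
  shows "c q = d q"
proof -
  have "poly (\<Sum>i\<le>n. monom (c i) i) = poly (\<Sum>i\<le>n. monom (d i) i)"
    by (simp add: poly_sum poly_monom assms(1) fun_eq_iff)
  then have "(\<Sum>i\<le>n. monom (c i) i) = (\<Sum>i\<le>n. monom (d i) i)"
    by (simp add: poly_eq_poly_eq_iff)
  then have "coeff (\<Sum>i\<le>n. monom (c i) i) q = coeff (\<Sum>i\<le>n. monom (d i) i) q"
    by simp
  then show ?thesis
    using assms(2) by (simp add: coeff_sum coeff_monom)
qed

definition incr_on :: "nat set \<Rightarrow> (nat \<Rightarrow> int) \<Rightarrow> nat \<Rightarrow> int" where
  "incr_on S k = (\<lambda>i. if i \<in> S then k i + 1 else k i)"

text \<open>\<open>esym_shifts I q\<close> is \<open>e\<^sub>q(E\<^sub>i : i \<in> I)\<close>.\<close>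
definition esym_shifts ::
    "nat set \<Rightarrow> nat \<Rightarrow> ((nat \<Rightarrow> int) \<Rightarrow> 'a::comm_monoid_add) \<Rightarrow> (nat \<Rightarrow> int) \<Rightarrow> 'a" where
  "esym_shifts I q f k = (\<Sum>S | S \<subseteq> I \<and> card S = q. f (incr_on S k))"

lemma esym_shift_eq_esym_shifts: "esym_shift n r p f = esym_shifts ({1..n} - {r}) p f"
  by (simp add: esym_shift_def esym_shifts_def incr_on_def fun_eq_iff)

lemma incr_on_upd: "incr_on S (k(a := k a + 1)) = (incr_on S k)(a := incr_on S k a + 1)"
  by (simp add: incr_on_def fun_eq_iff)

lemma incr_on_insert: "r \<notin> S \<Longrightarrow> incr_on (insert r S) k = incr_on S (k(r := k r + 1))"
  by (auto simp: incr_on_def fun_eq_iff)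

lemma esym_shifts_0 [simp]: "finite I \<Longrightarrow> esym_shifts I 0 f = f"
proof -
  assume "finite I"
  then have "{S. S \<subseteq> I \<and> card S = 0} = {{}}"
    by (auto dest: finite_subset)
  then show ?thesis
    by (simp add: esym_shifts_def incr_on_def fun_eq_iff)
qed

lemma esym_shifts_eq_0: "finite I \<Longrightarrow> card I < q \<Longrightarrow> esym_shifts I q f k = 0"
  unfolding esym_shifts_def by (rule sum.neutral) (auto dest: card_mono)

lemma esym_shifts_insert:
  assumes "finite I" and "r \<notin> I"
  shows "esym_shifts (insert r I) (Suc p) f k =
    esym_shifts I p f (k(r := k r + 1)) + esym_shifts I (Suc p) f k"
proof -
  let ?C = "\<lambda>q. {S. S \<subseteq> I \<and> card S = q}"
  have fin: "finite (?C q)" for q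
    using assms(1) by (rule finite_subset[rotated, OF finite_Pow_iff[THEN iffD2]]) auto
  have subsets: "{S. S \<subseteq> insert r I \<and> card S = Suc p} = insert r ` ?C p \<union> ?C (Suc p)"
  proof (intro equalityI subsetI)
    fix S assume S: "S \<in> {S. S \<subseteq> insert r I \<and> card S = Suc p}"
    show "S \<in> insert r ` ?C p \<union> ?C (Suc p)"
    proof (cases "r \<in> S")
      case True
      then have "S = insert r (S - {r})" and "S - {r} \<in> ?C p"
        using S assms(1) by (auto dest: finite_subset)
      then show ?thesis by blast
    qed (use S in auto)
  next
    fix S assume "S \<in> insert r ` ?C p \<union> ?C (Suc p)"
    then show "S \<in> {S. S \<subseteq> insert r I \<and> card S = Suc p}"
    proof
      assume "S \<in> insert r ` ?C p"
      then obtain T where "T \<subseteq> I" "card T = p" "S = insert r T" by blast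
      moreover have "finite T" "r \<notin> T"
        using \<open>T \<subseteq> I\<close> assms by (auto dest: finite_subset)
      ultimately show ?thesis by auto
    qed auto
  qed
  have inj: "inj_on (insert r) (?C p)" and disj: "insert r ` ?C p \<inter> ?C (Suc p) = {}"
    using assms(2) by (auto simp: inj_on_def)
  have "esym_shifts (insert r I) (Suc p) f k =
      (\<Sum>S\<in>insert r ` ?C p. f (incr_on S k)) + (\<Sum>S\<in>?C (Suc p). f (incr_on S k))"
    unfolding esym_shifts_def subsets by (rule sum.union_disjoint) (simp_all add: fin disj)
  also have "(\<Sum>S\<in>insert r ` ?C p. f (incr_on S k)) = (\<Sum>T\<in>?C p. f (incr_on (insert r T) k))"
    by (rule sum.reindex[OF inj, unfolded comp_def])
  also have "\<dots> = esym_shifts I p f (k(r := k r + 1))"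
    unfolding esym_shifts_def using assms(2) by (intro sum.cong refl) (subst incr_on_insert, auto)
  finally show ?thesis
    by (simp add: esym_shifts_def)
qed

lemma sum_Pow_incr_on_eq_esym_shifts:
  fixes f :: "(nat \<Rightarrow> int) \<Rightarrow> 'a::comm_semiring_1"
  assumes "finite I"
  shows "(\<Sum>S\<in>Pow I. t ^ card S * f (incr_on S k)) = (\<Sum>q\<le>card I. esym_shifts I q f k * t ^ q)"
proof -
  have "(\<Sum>S\<in>Pow I. t ^ card S * f (incr_on S k)) =
      (\<Sum>q\<le>card I. \<Sum>S | S \<in> Pow I \<and> card S = q. t ^ card S * f (incr_on S k))"
    using assms by (intro sum.group[symmetric]) (auto simp: card_mono)
  also have "\<dots> = (\<Sum>q\<le>card I. esym_shifts I q f k * t ^ q)"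
    unfolding esym_shifts_def sum_distrib_right by (intro sum.cong refl) (auto simp: mult.commute)
  finally show ?thesis .
qed

text \<open>The sum over \<open>Pow I\<close> is \<open>\<Prod>\<^sub>i\<^sub>\<in>\<^sub>I (1 + t E\<^sub>i) f\<close> evaluated at \<open>k\<close>.\<close>
lemma esym_shifts_eq_binomial:
  fixes f :: "(nat \<Rightarrow> int) \<Rightarrow> 'a::{idom, ring_char_0}"
  assumes "finite I"
    and "\<And>t. (\<Sum>S\<in>Pow I. t ^ card S * f (incr_on S k)) = (1 + t) ^ card I * c"
  shows "esym_shifts I q f k = of_nat (card I choose q) * c"
proof (cases "q \<le> card I")
  case True
  have "(\<Sum>i\<le>card I. esym_shifts I i f k * t ^ i) = (\<Sum>i\<le>card I. (of_nat (card I choose i) * c) * t ^ i)"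
    for t
  proof -
    have "(\<Sum>i\<le>card I. esym_shifts I i f k * t ^ i) = (1 + t) ^ card I * c"
      using assms by (simp add: sum_Pow_incr_on_eq_esym_shifts[symmetric])
    also have "(1 + t) ^ card I = (\<Sum>i\<le>card I. of_nat (card I choose i) * t ^ i)"
      using binomial_ring[of t 1 "card I"] by (simp add: add.commute)
    finally show ?thesis
      by (simp add: sum_distrib_left sum_distrib_right ac_simps)
  qed
  then show ?thesis
    using True by (rule polyfun_coeffs_eq)
next
  case False
  then show ?thesis
    using assms(1) by (simp add: esym_shifts_eq_0 binomial_eq_0)
qed

lemma vdm_eq_vandermonde_quot: "vdm n k = vandermonde_quot n (\<lambda>i. of_int (k (Suc i)))"
proof -
  have "{1..n} = {Suc 0..<Suc n}" and "\<And>i. {i<..n} = {Suc i..<Suc n}"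
    by auto
  then show ?thesis
    unfolding vdm_def vandermonde_quot_def
    by (simp only: prod.shift_bounds_Suc_ivl diff_Suc_Suc of_int_diff)
qed

lemma vdm_incr_sum: "(\<Sum>S\<in>Pow {1..n}. t ^ card S * vdm n (incr_on S k)) = (1 + t) ^ n * vdm n k"
proof -
  define x :: "nat \<Rightarrow> rat" where "x = (\<lambda>i. of_int (k (Suc i)))"
  have "bij_betw (image Suc) (Pow {0..<n}) (Pow {1..n})"
    by (rule bij_betw_Pow) (simp add: bij_betw_def atLeastLessThanSuc_atLeastAtMost)
  then have "(\<Sum>S\<in>Pow {1..n}. t ^ card S * vdm n (incr_on S k)) =
      (\<Sum>S\<in>Pow {0..<n}. t ^ card (Suc ` S) * vdm n (incr_on (Suc ` S) k))"
    by (rule sum.reindex_bij_betw[symmetric])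
  also have "\<dots> = (\<Sum>S\<in>Pow {0..<n}. t ^ card S * det (binomial_mat n (\<lambda>i. if i \<in> S then x i + 1 else x i)))"
  proof (intro sum.cong refl)
    fix S
    have "(\<lambda>i. of_int (incr_on (Suc ` S) k (Suc i))) = (\<lambda>i. if i \<in> S then x i + 1 else x i)"
      by (auto simp: incr_on_def x_def)
    then show "t ^ card (Suc ` S) * vdm n (incr_on (Suc ` S) k) =
        t ^ card S * det (binomial_mat n (\<lambda>i. if i \<in> S then x i + 1 else x i))"
      by (simp add: card_image det_binomial_mat vdm_eq_vandermonde_quot)
  qed
  also have "\<dots> = (1 + t) ^ n * vdm n k"
    unfolding det_binomial_mat_incr_sum by (simp add: det_binomial_mat vdm_eq_vandermonde_quot x_def)
  finally show ?thesis .
qed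

lemma esym_shifts_vdm: "esym_shifts {1..n} q (vdm n) k = of_nat (n choose q) * vdm n k"
  using esym_shifts_eq_binomial[of "{1..n}" "vdm n" k "vdm n k" q] vdm_incr_sum by simp

lemma esym_shifts_shiftE: "esym_shifts I q (shiftE a f) = shiftE a (esym_shifts I q f)"
  by (simp add: esym_shifts_def shiftE_def incr_on_upd fun_eq_iff)

lemma esym_shifts_opT: "esym_shifts I q (opT a b f) = opT a b (esym_shifts I q f)"
proof -
  have "esym_shifts I q (opT a b f) k =
      esym_shifts I q f k - esym_shifts I q (shiftE a f) k + esym_shifts I q (shiftE a (shiftE b f)) k"
    for k by (simp add: esym_shifts_def opT_def sum.distrib sum_subtractf)
  then show ?thesis
    by (simp add: fun_eq_iff opT_def esym_shifts_shiftE)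
qed

lemma opT_scale: "opT a b (\<lambda>k. c * f k) = (\<lambda>k. c * opT a b f k)"
  by (simp add: opT_def shiftE_def fun_eq_iff algebra_simps)

text \<open>The operators in \<open>alpha\<close> commute with the shifts, so the eigenvalue relation of
\<open>vdm\<close> is inherited by \<open>alpha\<close>.\<close>
lemma esym_shifts_alpha: "esym_shifts {1..n} q (alpha n) k = of_nat (n choose q) * alpha n k"
proof -
  have "esym_shifts I q (foldr (\<lambda>(a, b). opT a b) L g) = foldr (\<lambda>(a, b). opT a b) L (esym_shifts I q g)"
    for I L g by (induction L) (auto simp: esym_shifts_opT)
  moreover have "foldr (\<lambda>(a, b). opT a b) L (\<lambda>k. c * g k) = (\<lambda>k. c * foldr (\<lambda>(a, b). opT a b) L g k)"
    for L c g by (induction L) (auto simp: opT_scale)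
  moreover have "esym_shifts {1..n} q (vdm n) = (\<lambda>k. of_nat (n choose q) * vdm n k)"
    by (rule ext) (rule esym_shifts_vdm)
  ultimately show ?thesis
    unfolding alpha_def by simp
qed

lemma esym_shift_alpha_recurrence:
  assumes "r \<in> {1..n}"
  shows "esym_shift n r p (alpha n) (k(r := k r + 1)) =
    of_nat (n choose Suc p) * alpha n k - esym_shift n r (Suc p) (alpha n) k"
  using esym_shifts_insert[of "{1..n} - {r}" r p "alpha n" k] esym_shifts_alpha[of n "Suc p" k] assms
  by (simp add: esym_shift_eq_esym_shifts insert_absorb)

section \<open>Alternating binomial sums\<close>

lemma alternating_sum_Suc_choose:
  fixes f :: "nat \<Rightarrow> 'a::comm_ring_1"
  shows "(\<Sum>j\<le>Suc n. (-1)^j * of_nat (Suc n choose j) * f j) =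
    (\<Sum>j\<le>n. (-1)^j * of_nat (n choose j) * (f j - f (Suc j)))"
proof -
  have "(\<Sum>j\<le>Suc n. (-1)^j * of_nat (Suc n choose j) * f j) =
      f 0 + (\<Sum>j\<le>n. (-1)^(Suc j) * of_nat (n choose Suc j) * f (Suc j)) +
      (\<Sum>j\<le>n. (-1)^(Suc j) * of_nat (n choose j) * f (Suc j))"
    by (subst sum.atMost_Suc_shift) (simp add: sum.distrib algebra_simps del: power_Suc)
  also have "f 0 + (\<Sum>j\<le>n. (-1)^(Suc j) * of_nat (n choose Suc j) * f (Suc j)) =
      (\<Sum>j\<le>n. (-1)^j * of_nat (n choose j) * f j)"
  proof (cases n)
    case (Suc n')
    have "(\<Sum>j\<le>n. (-1)^j * of_nat (n choose j) * f j) =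
        f 0 + (\<Sum>j\<le>n'. (-1)^(Suc j) * of_nat (n choose Suc j) * f (Suc j))"
      unfolding Suc by (subst sum.atMost_Suc_shift) simp
    moreover have "(\<Sum>j\<le>n. (-1)^(Suc j) * of_nat (n choose Suc j) * f (Suc j)) =
        (\<Sum>j\<le>n'. (-1)^(Suc j) * of_nat (n choose Suc j) * f (Suc j))"
      unfolding Suc by (subst sum.atMost_Suc) (simp add: binomial_eq_0 del: binomial_Suc_Suc)
    ultimately show ?thesis by simp
  qed simp
  finally show ?thesis
    by (simp add: sum.distrib[symmetric] sum_subtractf[symmetric] algebra_simps)
qed

text \<open>The \<open>n\<close>-th finite difference of a polynomial of degree below \<open>n\<close> vanishes.\<close>
lemma alternating_sum_choose_gchoose_eq_0:
  fixes w :: "'a::field_char_0"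
  assumes "m < n"
  shows "(\<Sum>j\<le>n. (-1)^j * of_nat (n choose j) * ((w - of_nat j) gchoose m)) = 0"
  using assms
proof (induction n arbitrary: w m)
  case (Suc n)
  show ?case
  proof (cases m)
    case (Suc m')
    have "((w - of_nat j) gchoose m) - ((w - of_nat (Suc j)) gchoose m) = (w - 1 - of_nat j) gchoose m'" for j
      using gbinomial_Suc_Suc[of "w - 1 - of_nat j" m'] by (simp add: Suc diff_diff_eq)
    then have "(\<Sum>j\<le>Suc n. (-1)^j * of_nat (Suc n choose j) * ((w - of_nat j) gchoose m)) =
        (\<Sum>j\<le>n. (-1)^j * of_nat (n choose j) * ((w - 1 - of_nat j) gchoose m'))"
      by (simp only: alternating_sum_Suc_choose)
    also have "\<dots> = 0"
      using Suc.IH[of m' "w - 1"] Suc.prems Suc by simp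
    finally show ?thesis .
  qed (subst alternating_sum_Suc_choose, simp)
qed simp

lemma gchoose_eq_alternating_sum:
  fixes w :: "'a::field_char_0"
  assumes "1 \<le> n"
  shows "(\<Sum>p<n. (-1)^p * of_nat (n choose Suc p) * ((w - 1 - of_nat p) gchoose (n - 1))) =
    w gchoose (n - 1)"
proof -
  obtain n' where n: "n = Suc n'"
    using assms by (cases n) auto
  have "0 = (\<Sum>j\<le>n. (-1)^j * of_nat (n choose j) * ((w - of_nat j) gchoose (n - 1)))"
    using alternating_sum_choose_gchoose_eq_0[of "n - 1" n w] n by simp
  also have "\<dots> = (w gchoose (n - 1)) +
      (\<Sum>p\<le>n'. (-1)^(Suc p) * of_nat (n choose Suc p) * ((w - of_nat (Suc p)) gchoose (n - 1)))"
    unfolding n by (subst sum.atMost_Suc_shift) simp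
  also have "(\<Sum>p\<le>n'. (-1)^(Suc p) * of_nat (n choose Suc p) * ((w - of_nat (Suc p)) gchoose (n - 1))) =
      - (\<Sum>p<n. (-1)^p * of_nat (n choose Suc p) * ((w - 1 - of_nat p) gchoose (n - 1)))"
    unfolding n lessThan_Suc_atMost by (simp add: sum_negf[symmetric] algebra_simps)
  finally show ?thesis by simp
qed

section \<open>Translation in one variable\<close>

text \<open>The right-hand side of the theorem, with an arbitrary family \<open>G\<close> in place of
\<open>\<lambda>p. e\<^sub>p(\<dots>) alpha\<close>.\<close>
definition shift_expansion ::
    "nat \<Rightarrow> (nat \<Rightarrow> (nat \<Rightarrow> int) \<Rightarrow> 'a::field_char_0) \<Rightarrow> int \<Rightarrow> (nat \<Rightarrow> int) \<Rightarrow> 'a" where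
  "shift_expansion n G z k = (\<Sum>p<n. (-1)^p * (of_int (int n - 1 - int p + z) gchoose (n - 1)) * G p k)"

lemma shift_expansion_0:
  assumes "1 \<le> n"
  shows "shift_expansion n G 0 k = G 0 k"
proof -
  have "(of_int (int n - 1 - int p) :: 'a) gchoose (n - 1) = (if p = 0 then 1 else 0)" if "p < n" for p
  proof -
    have "(of_int (int n - 1 - int p) :: 'a) = of_nat (n - 1 - p)"
      using that by (simp add: of_nat_diff)
    then have "(of_int (int n - 1 - int p) :: 'a) gchoose (n - 1) = of_nat ((n - 1 - p) choose (n - 1))"
      by (simp add: binomial_gbinomial)
    then show ?thesis
      using that by (simp add: binomial_eq_0)
  qed
  then have "shift_expansion n G 0 k = (\<Sum>p<n. if p = 0 then G p k else 0)"
    unfolding shift_expansion_def by (intro sum.cong refl) simp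
  then show ?thesis
    using assms by simp
qed

lemma shift_expansion_step:
  assumes "1 \<le> n" and "G n k = 0"
    and recurrence: "\<And>p. G p (k(r := k r + 1)) = of_nat (n choose Suc p) * G 0 k - G (Suc p) k"
  shows "shift_expansion n G z (k(r := k r + 1)) = shift_expansion n G (z + 1) k"
proof -
  obtain n' where n: "n = Suc n'"
    using assms(1) by (cases n) auto
  define c where "c p = (of_int (int n - 1 - int p + z) :: 'a) gchoose (n - 1)" for p
  have c_Suc: "(of_int (int n - 1 - int (Suc p) + (z + 1)) :: 'a) gchoose (n - 1) = c p" for p
    by (simp add: c_def algebra_simps)
  have "shift_expansion n G z (k(r := k r + 1)) =
      (\<Sum>p<n. (-1)^p * c p * (of_nat (n choose Suc p) * G 0 k - G (Suc p) k))"
    unfolding shift_expansion_def recurrence c_def ..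
  also have "\<dots> = (\<Sum>p<n. (-1)^p * of_nat (n choose Suc p) * c p) * G 0 k -
      (\<Sum>p<n. (-1)^p * c p * G (Suc p) k)"
    by (simp add: sum_subtractf sum_distrib_left sum_distrib_right algebra_simps)
  also have "(\<Sum>p<n. (-1)^p * of_nat (n choose Suc p) * c p) = (of_int (int n + z) :: 'a) gchoose (n - 1)"
    using gchoose_eq_alternating_sum[OF assms(1), of "of_int (int n + z)"]
    by (simp add: c_def algebra_simps)
  also have "(\<Sum>p<n. (-1)^p * c p * G (Suc p) k) = (\<Sum>p<n'. (-1)^p * c p * G (Suc p) k)"
    using assms(2) by (simp add: n)
  also have "(of_int (int n + z) gchoose (n - 1)) * G 0 k - (\<Sum>p<n'. (-1)^p * c p * G (Suc p) k) =
      shift_expansion n G (z + 1) k"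
    unfolding shift_expansion_def n sum.lessThan_Suc_shift c_Suc[unfolded n]
    by (simp add: sum_negf algebra_simps)
  finally show ?thesis .
qed

lemma shift_expansion_translate:
  assumes "1 \<le> n" and "\<And>k. G n k = 0"
    and "\<And>p k. G p (k(r := k r + 1)) = of_nat (n choose Suc p) * G 0 k - G (Suc p) k"
  shows "G 0 (k(r := k r + z)) = shift_expansion n G z k"
proof (induction z arbitrary: k rule: int_induct[where k = 0])
  case base
  show ?case
    using shift_expansion_0[OF assms(1), of G k] by simp
next
  case (step1 i)
  define k' where "k' = k(r := k r + 1)"
  have "G 0 (k(r := k r + (i + 1))) = G 0 (k'(r := k' r + i))"
    by (simp add: k'_def algebra_simps)
  also have "\<dots> = shift_expansion n G i k'"
    by (rule step1.IH)
  also have "\<dots> = shift_expansion n G (i + 1) k"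
    unfolding k'_def by (rule shift_expansion_step[of n G k r i, OF assms])
  finally show ?case .
next
  case (step2 i)
  define k' where "k' = k(r := k r - 1)"
  have "G 0 (k(r := k r + (i - 1))) = G 0 (k'(r := k' r + i))"
    by (simp add: k'_def algebra_simps)
  also have "\<dots> = shift_expansion n G ((i - 1) + 1) k'"
    by (simp add: step2.IH)
  also have "\<dots> = shift_expansion n G (i - 1) (k'(r := k' r + 1))"
    using shift_expansion_step[of n G k' r "i - 1", OF assms] by simp
  also have "k'(r := k' r + 1) = k"
    by (simp add: k'_def)
  finally show ?case .
qed

theorem lemma1:
  fixes n r :: nat and z :: int and k :: "nat \<Rightarrow> int"
  assumes "1 \<le> n" and "1 \<le> r" and "r \<le> n"
  shows "alpha n (k(r := k r + z)) =
    (\<Sum>p<n. (-1) ^ p * ((of_int (int n - 1 - int p + z) :: rat) gchoose (n - 1))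
             * esym_shift n r p (alpha n) k)"
proof -
  let ?G = "\<lambda>p. esym_shift n r p (alpha n)"
  have r: "r \<in> {1..n}"
    using assms by simp
  have "?G 0 = alpha n"
    by (simp add: esym_shift_eq_esym_shifts)
  moreover have "?G n k = 0" for k
    unfolding esym_shift_eq_esym_shifts using r assms(1) by (intro esym_shifts_eq_0) auto
  moreover note esym_shift_alpha_recurrence[OF r]
  ultimately show ?thesis
    using shift_expansion_translate[of n ?G r k z] assms(1) by (simp add: shift_expansion_def)
qed

end
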